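(* Let $\theta=(\mathrm{vec}(W),b^{(v)},b^{(h)})\in\mathbb{R}^d$ collect the parameters of a binary RBM, and consider the $\ell_2$-regularized Contrastive Divergence recursion $\theta_{t+1}=\theta_t+\eta(G_t-\Lambda\theta_t)$, where $G_t$ is the stochastic Contrastive Divergence gradient estimate at step $t$ and $\Lambda=\mathrm{diag}(\psi_W I,\psi_b I,\psi_b I)$ with $\psi_W>0$, $\psi_b>0$. Assume: (1) the minibatch size is finite; (2) visible units are binary; (3) hidden activations lie in $(0,1)$; (4) $0<\eta\psi_{\max}<2$, where $\psi_{\max}=\max(\psi_W,\psi_b)$. Then $\sup_{t\ge0}\|\theta_t\|_2<\infty$.
   Context: The CD gradient estimate $G_t$ consists of differences between minibatch data statistics and negative-phase (model) statistics: for the weights, averaged visible–hidden correlations $v h^\top$ (data minus model), and for the biases, averaged unit activations (data minus model), computed from binary visible vectors and hidden activations/samples in $[0,1]$ as in standard RBM training. $\|\cdot\|_2$ is the Euclidean norm on $\mathbb{R}^d$. The sampling temperature may be fixed or time-varying. *)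

theory Defs
  imports "HOL-Analysis.Analysis"
begin

text \<open>Parameters of a binary RBM with visible index type 'v and hidden index type 'h:
  theta = (W, b_v, b_h).  The norm on the product type is the Euclidean norm of the
  concatenated vector (vec W, b_v, b_h) (Frobenius norm on the matrix part).\<close>

type_synonym ('v, 'h) rbm_params = "(real ^ 'h ^ 'v) \<times> (real ^ 'v) \<times> (real ^ 'h)"

definition binary_vec :: "real ^ 'n \<Rightarrow> bool" where
  "binary_vec x \<longleftrightarrow> (\<forall>i. x $ i \<in> {0, 1})"

definition unit_cube_vec :: "real ^ 'n \<Rightarrow> bool" where
  "unit_cube_vec x \<longleftrightarrow> (\<forall>i. x $ i \<in> {0..1})"

definition cd_grad ::
  "nat \<Rightarrow> (nat \<Rightarrow> real ^ 'v::finite) \<Rightarrow> (nat \<Rightarrow> real ^ 'h::finite) \<Rightarrow> (nat \<Rightarrow> real ^ 'v) \<Rightarrow> (nat \<Rightarrow> real ^ 'h)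
   \<Rightarrow> ('v, 'h) rbm_params" where
  "cd_grad B vdat hdat vmod hmod =
    ((1 / real B) *\<^sub>R (\<Sum>k<B. (\<chi> i j. vdat k $ i * hdat k $ j - vmod k $ i * hmod k $ j)),
     (1 / real B) *\<^sub>R (\<Sum>k<B. vdat k - vmod k),
     (1 / real B) *\<^sub>R (\<Sum>k<B. hdat k - hmod k))"

definition reg_op :: "real \<Rightarrow> real \<Rightarrow> ('v::finite, 'h::finite) rbm_params \<Rightarrow> ('v, 'h) rbm_params" where
  "reg_op psiW psib \<theta> = (psiW *\<^sub>R fst \<theta>, psib *\<^sub>R fst (snd \<theta>), psib *\<^sub>R snd (snd \<theta>))"

end

theory Submission
  imports Defs
begin

text \<open>Write the regularized recursion as \<open>\<theta>\<^sub>t\<^sub>+\<^sub>1 = (I - \<eta>\<Lambda>) \<theta>\<^sub>t + \<eta> G\<^sub>t\<close>. Since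
  \<open>I - \<eta>\<Lambda>\<close> scales each parameter block by \<open>1 - \<eta>\<psi>\<close> with \<open>0 < \<eta>\<psi> < 2\<close>, it is a
  contraction with factor \<open>q = max \<bar>1 - \<eta>\<psi>\<^sub>W\<bar> \<bar>1 - \<eta>\<psi>\<^sub>b\<bar> < 1\<close>. All visible values and
  hidden activations lie in \<open>[0,1]\<close>, so every entry of the CD estimate \<open>G\<^sub>t\<close> is a
  minibatch average of differences of numbers in \<open>[0,1]\<close>, and \<open>\<parallel>G\<^sub>t\<parallel>\<close> is bounded
  uniformly in \<open>t\<close>. A contraction perturbed by bounded inputs keeps its iterates in the
  ball of radius \<open>max \<parallel>\<theta>\<^sub>0\<parallel> (\<eta> sup \<parallel>G\<parallel> / (1 - q))\<close>.\<close>

lemma norm_le_of_contractive_recurrence: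
  fixes x g :: "nat \<Rightarrow> 'a::real_normed_vector" and A :: "'a \<Rightarrow> 'a"
  assumes q: "0 \<le> q" "q < 1"
    and contraction: "\<And>y. norm (A y) \<le> q * norm y"
    and input_bound: "\<And>t. norm (g t) \<le> M"
    and recurrence: "\<And>t. x (Suc t) = A (x t) + g t"
  shows "norm (x t) \<le> max (norm (x 0)) (M / (1 - q))"
proof (induction t)
  case 0
  then show ?case by simp
next
  case (Suc t)
  define R where "R = max (norm (x 0)) (M / (1 - q))"
  have "M / (1 - q) \<le> R"
    by (simp add: R_def)
  then have "M \<le> (1 - q) * R"
    using q by (simp add: pos_divide_le_eq mult.commute)
  have "norm (x (Suc t)) \<le> q * norm (x t) + M"
    using recurrence[of t] norm_triangle_ineq[of "A (x t)" "g t"] contraction[of "x t"]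
      input_bound[of t] by simp
  also have "\<dots> \<le> q * R + M"
    using Suc q by (simp add: R_def mult_left_mono)
  also have "\<dots> \<le> R"
    using \<open>M \<le> (1 - q) * R\<close> by (simp add: algebra_simps)
  finally show ?case
    unfolding R_def .
qed

lemma norm_Pair_scaleR_le:
  fixes x :: "'a::real_normed_vector" and y :: "'b::real_normed_vector"
  shows "norm (a *\<^sub>R x, b *\<^sub>R y) \<le> max \<bar>a\<bar> \<bar>b\<bar> * norm (x, y)"
proof -
  let ?m = "max \<bar>a\<bar> \<bar>b\<bar>"
  have "(\<bar>a\<bar> * norm x)\<^sup>2 + (\<bar>b\<bar> * norm y)\<^sup>2 \<le> (?m * norm x)\<^sup>2 + (?m * norm y)\<^sup>2"
    by (intro add_mono power_mono mult_right_mono) auto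
  also have "\<dots> = (?m * norm (x, y))\<^sup>2"
    by (simp add: norm_Pair power_mult_distrib distrib_left)
  finally show ?thesis
    by (simp add: norm_Pair real_le_lsqrt)
qed

lemma norm_minus_reg_op_le:
  "norm (\<theta> - \<eta> *\<^sub>R reg_op psiW psib \<theta>) \<le> max \<bar>1 - \<eta> * psiW\<bar> \<bar>1 - \<eta> * psib\<bar> * norm \<theta>"
proof -
  obtain W bv bh where \<theta>: "\<theta> = (W, bv, bh)"
    by (cases \<theta>) auto
  have "\<theta> - \<eta> *\<^sub>R reg_op psiW psib \<theta> = ((1 - \<eta> * psiW) *\<^sub>R W, (1 - \<eta> * psib) *\<^sub>R (bv, bh))"
    by (simp add: \<theta> reg_op_def algebra_simps)
  then show ?thesis
    using norm_Pair_scaleR_le[of "1 - \<eta> * psiW" W "1 - \<eta> * psib" "(bv, bh)"] by (simp add: \<theta>)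
qed

lemma max_abs_one_minus_lt_one:
  fixes \<eta> a b :: real
  assumes "0 < a" "0 < b" "0 < \<eta> * max a b" "\<eta> * max a b < 2"
  shows "max \<bar>1 - \<eta> * a\<bar> \<bar>1 - \<eta> * b\<bar> < 1"
proof -
  have "0 < \<eta>"
    using assms by (simp add: zero_less_mult_iff)
  then have "0 < \<eta> * a" "\<eta> * a \<le> \<eta> * max a b" "0 < \<eta> * b" "\<eta> * b \<le> \<eta> * max a b"
    using assms by (simp_all add: mult_left_mono)
  then show ?thesis
    using assms(4) by auto
qed

lemma norm_scaleR_average_le:
  fixes f :: "nat \<Rightarrow> 'a::real_normed_vector"
  assumes "0 < B" and "\<And>k. k < B \<Longrightarrow> norm (f k) \<le> M"
  shows "norm ((1 / real B) *\<^sub>R (\<Sum>k<B. f k)) \<le> M"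
proof -
  have "norm (\<Sum>k<B. f k) \<le> real B * M"
    using norm_sum[of f "{..<B}"] sum_mono[of "{..<B}" "\<lambda>k. norm (f k)" "\<lambda>_. M"] assms(2)
    by simp
  then show ?thesis
    using assms(1) by (simp add: field_simps)
qed

lemma norm_vec_le_card_mult:
  fixes x :: "'a::real_normed_vector ^ 'n::finite"
  assumes "\<And>i. norm (x $ i) \<le> c"
  shows "norm x \<le> real CARD('n) * c"
proof -
  have "norm x \<le> (\<Sum>i\<in>UNIV. norm (x $ i))"
    unfolding norm_vec_def by (rule L2_set_le_sum) simp
  also have "\<dots> \<le> (\<Sum>i\<in>(UNIV :: 'n set). c)"
    using assms by (rule sum_mono)
  finally show ?thesis
    by simp
qed

lemma binary_vec_imp_unit_cube_vec: "binary_vec x \<Longrightarrow> unit_cube_vec x"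
  unfolding binary_vec_def unit_cube_vec_def
  by (metis atLeastAtMost_iff empty_iff insert_iff order_refl zero_le_one)

lemma norm_diff_unit_cube_vec_le:
  fixes x y :: "real ^ 'n::finite"
  assumes "unit_cube_vec x" and "unit_cube_vec y"
  shows "norm (x - y) \<le> real CARD('n)"
proof -
  have "norm ((x - y) $ i) \<le> 1" for i
  proof -
    have "x $ i \<in> {0..1}" "y $ i \<in> {0..1}"
      using assms unfolding unit_cube_vec_def by blast+
    then show ?thesis
      by auto
  qed
  then show ?thesis
    using norm_vec_le_card_mult[of "x - y" 1] by simp
qed

lemma norm_outer_product_diff_le:
  fixes v v' :: "real ^ 'v::finite" and h h' :: "real ^ 'h::finite"
  assumes "unit_cube_vec v" "unit_cube_vec h" "unit_cube_vec v'" "unit_cube_vec h'"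
  shows "norm (\<chi> i j. v $ i * h $ j - v' $ i * h' $ j) \<le> real CARD('v) * real CARD('h)"
proof -
  have "\<bar>v $ i * h $ j - v' $ i * h' $ j\<bar> \<le> 1" for i j
  proof -
    have "v $ i * h $ j \<in> {0..1}" "v' $ i * h' $ j \<in> {0..1}"
      using assms unfolding unit_cube_vec_def by (auto intro: mult_le_one)
    then show ?thesis
      by auto
  qed
  then have "norm (\<chi> j. v $ i * h $ j - v' $ i * h' $ j) \<le> real CARD('h) * 1" for i
    by (intro norm_vec_le_card_mult) simp
  then show ?thesis
    by (intro norm_vec_le_card_mult) simp
qed

lemma norm_cd_grad_le:
  fixes vdat vmod :: "nat \<Rightarrow> real ^ 'v::finite" and hdat hmod :: "nat \<Rightarrow> real ^ 'h::finite"
  assumes "0 < B"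
    and vis: "\<And>k. k < B \<Longrightarrow> unit_cube_vec (vdat k) \<and> unit_cube_vec (vmod k)"
    and hid: "\<And>k. k < B \<Longrightarrow> unit_cube_vec (hdat k) \<and> unit_cube_vec (hmod k)"
  shows "norm (cd_grad B vdat hdat vmod hmod)
    \<le> real CARD('v) * real CARD('h) + real CARD('v) + real CARD('h)"
proof -
  let ?G = "cd_grad B vdat hdat vmod hmod"
  have W: "norm (fst ?G) \<le> real CARD('v) * real CARD('h)"
    unfolding cd_grad_def fst_conv
  proof (rule norm_scaleR_average_le[OF \<open>0 < B\<close>])
    fix k
    assume "k < B"
    with vis hid show "norm (\<chi> i j. vdat k $ i * hdat k $ j - vmod k $ i * hmod k $ j)
        \<le> real CARD('v) * real CARD('h)"
      by (blast intro: norm_outer_product_diff_le)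
  qed
  have bv: "norm (fst (snd ?G)) \<le> real CARD('v)"
    unfolding cd_grad_def fst_conv snd_conv
    by (rule norm_scaleR_average_le[OF \<open>0 < B\<close>]) (use vis norm_diff_unit_cube_vec_le in blast)
  have bh: "norm (snd (snd ?G)) \<le> real CARD('h)"
    unfolding cd_grad_def snd_conv
    by (rule norm_scaleR_average_le[OF \<open>0 < B\<close>]) (use hid norm_diff_unit_cube_vec_le in blast)
  have "norm ?G \<le> norm (fst ?G) + (norm (fst (snd ?G)) + norm (snd (snd ?G)))"
    using norm_Pair_le[of "fst ?G" "snd ?G"] norm_Pair_le[of "fst (snd ?G)" "snd (snd ?G)"]
    by simp
  then show ?thesis
    using W bv bh by linarith
qed

theorem theorem4:
  fixes \<theta> :: "nat \<Rightarrow> ('v::finite, 'h::finite) rbm_params"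
    and B :: nat
    and vdat vmod :: "nat \<Rightarrow> nat \<Rightarrow> real ^ 'v"
    and hdat hmod :: "nat \<Rightarrow> nat \<Rightarrow> real ^ 'h"
    and \<eta> psiW psib :: real
  assumes B_pos: "0 < B"
    and vis_binary: "\<And>t k. k < B \<Longrightarrow> binary_vec (vdat t k) \<and> binary_vec (vmod t k)"
    and hid_unit: "\<And>t k. k < B \<Longrightarrow> unit_cube_vec (hdat t k) \<and> unit_cube_vec (hmod t k)"
    and psiW_pos: "0 < psiW" and psib_pos: "0 < psib"
    and step_lo: "0 < \<eta> * max psiW psib" and step_hi: "\<eta> * max psiW psib < 2"
    and recursion: "\<And>t. \<theta> (Suc t) =
       \<theta> t + \<eta> *\<^sub>R (cd_grad B (vdat t) (hdat t) (vmod t) (hmod t) - reg_op psiW psib (\<theta> t))"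
  shows "bdd_above (range (\<lambda>t. norm (\<theta> t)))"
proof -
  define q where "q = max \<bar>1 - \<eta> * psiW\<bar> \<bar>1 - \<eta> * psib\<bar>"
  define C where "C = real CARD('v) * real CARD('h) + real CARD('v) + real CARD('h)"
  define G where "G t = cd_grad B (vdat t) (hdat t) (vmod t) (hmod t)" for t
  have "0 \<le> q" "q < 1"
    unfolding q_def using max_abs_one_minus_lt_one[OF psiW_pos psib_pos step_lo step_hi] by simp_all
  have contraction: "norm (y - \<eta> *\<^sub>R reg_op psiW psib y) \<le> q * norm y" for y
    unfolding q_def by (rule norm_minus_reg_op_le)
  have "norm (G t) \<le> C" for t
    unfolding G_def C_def
    by (rule norm_cd_grad_le[OF B_pos])
      (use vis_binary hid_unit binary_vec_imp_unit_cube_vec in blast)+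
  then have input_bound: "norm (\<eta> *\<^sub>R G t) \<le> \<bar>\<eta>\<bar> * C" for t
    by (simp add: mult_left_mono)
  have recurrence: "\<theta> (Suc t) = (\<theta> t - \<eta> *\<^sub>R reg_op psiW psib (\<theta> t)) + \<eta> *\<^sub>R G t" for t
    using recursion[of t] by (simp add: G_def algebra_simps)
  have "norm (\<theta> t) \<le> max (norm (\<theta> 0)) (\<bar>\<eta>\<bar> * C / (1 - q))" for t
    using norm_le_of_contractive_recurrence[where A = "\<lambda>y. y - \<eta> *\<^sub>R reg_op psiW psib y"
        and g = "\<lambda>t. \<eta> *\<^sub>R G t" and x = \<theta>,
        OF \<open>0 \<le> q\<close> \<open>q < 1\<close> contraction input_bound recurrence] .
  then show ?thesis
    by (intro bdd_aboveI2)
qed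

end
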